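(* Let $r$, $s$, $k$ and $n$ be positive integers with $r<k<n$ and $s+1<n$. Let $d=\gcd(s+1,n)$. If \[ k(s+1)+d-3\leq rn-1, \] then there exists an $(s,k,r)$-clash-free permutation of $\mathbb{Z}_n$.
   Context: For integers $u\leq v$, $[u,v]$ denotes the set of integers $i$ with $u\leq i\leq v$. For a subset $X\subseteq\mathbb{Z}_n$, define $||X||_n=\min\{t\in\mathbb{Z}\mid X\subseteq x+[0,t]\bmod n \text{ for some } x\in\mathbb{Z}_n\}$. For a permutation $\pi$ of $\mathbb{Z}_n$, an $(s,k,r)$-clash is a subset $X\subseteq\mathbb{Z}_n$ of cardinality $r+1$ such that $||X||_n<s$ and $||\pi(X)||_n<k$. The permutation $\pi$ is $(s,k,r)$-clash-free if it has no $(s,k,r)$-clashes. *)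

theory Defs
  imports Main
begin

text \<open>Z_n is modelled as the carrier {0..<n} of natural numbers with arithmetic mod n.\<close>

definition cyc_interval :: "nat \<Rightarrow> nat \<Rightarrow> nat \<Rightarrow> nat set" where
  "cyc_interval n x t = {(x + i) mod n | i. i \<le> t}"

definition cyc_norm :: "nat \<Rightarrow> nat set \<Rightarrow> nat" where
  "cyc_norm n X = (LEAST t. \<exists>x<n. X \<subseteq> cyc_interval n x t)"

definition is_clash :: "nat \<Rightarrow> (nat \<Rightarrow> nat) \<Rightarrow> nat \<Rightarrow> nat \<Rightarrow> nat \<Rightarrow> nat set \<Rightarrow> bool" where
  "is_clash n \<pi> s k r X \<longleftrightarrow> X \<subseteq> {0..<n} \<and> card X = r + 1 \<and>
     cyc_norm n X < s \<and> cyc_norm n (\<pi> ` X) < k"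

definition clash_free :: "nat \<Rightarrow> (nat \<Rightarrow> nat) \<Rightarrow> nat \<Rightarrow> nat \<Rightarrow> nat \<Rightarrow> bool" where
  "clash_free n \<pi> s k r \<longleftrightarrow> \<not> (\<exists>X. is_clash n \<pi> s k r X)"

end

theory Submission
  imports Defs
begin

(* Write n = d m with d = gcd (s + 1) n and s + 1 = d a, so that a and m are coprime.
   The map sigma y = ((s + 1) y - y div m) mod n (skew_perm) is a permutation of Z_n:
   the correction y div m, which lies in [0, d), separates the d points that
   y |-> (s + 1) y collapses.  Its inverse is clash-free.  Indeed, sigma has the integer
   lift (skew_lift) P y = (s + 1) y - y div m + d (y div n), with P (y + n) = P y + (s + 1) n,
   whose increments over 0 <= b - a < n lie between s (b - a) and (s + 1) (b - a) + d - 1.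
   A clash of sigma^-1 amounts to a set of r + 1 points in k consecutive residues whose
   sigma-images lie in s consecutive residues.  Lifting to the integers, the r + 1 values
   of P lie in translates of a window of width s by multiples of n, pairwise distinct
   translates since P increases by at least s per step; so P spreads by at least
   r n - (s - 1) over an interval of length at most k - 1, i.e. by at most
   (s + 1) (k - 1) + d - 1, and r n <= k (s + 1) + d - 3 follows.  Of the hypotheses of
   the theorem only n > 0, k < n and the inequality are needed. *)

lemma zdiv_diff_le:
  fixes a b m :: int
  assumes "0 < m" "a \<le> b"
  shows "b div m - a div m \<le> b - a"
  using assms(2)
proof (induction b rule: int_ge_induct)
  case base
  then show ?case by simp
next
  case (step i)
  have "(i + 1) div m \<le> (i + m) div m" using assms(1) by (simp add: zdiv_mono1)
  also have "\<dots> = i div m + 1" using assms(1) by (subst div_add_self2) auto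
  finally show ?case using step by simp
qed

lemma card_le_Max_minus_Min:
  fixes S :: "int set"
  assumes "finite S" "S \<noteq> {}"
  shows "int (card S) \<le> Max S - Min S + 1"
proof -
  have "card S \<le> card {Min S..Max S}"
    using assms by (intro card_mono) auto
  moreover have "Min S \<le> Max S" using assms by simp
  ultimately show ?thesis by simp
qed

lemma slope_abs_ge:
  fixes P :: "int \<Rightarrow> int"
  assumes "\<And>a b. a \<le> b \<Longrightarrow> s * (b - a) \<le> P b - P a"
  shows "s * \<bar>b - a\<bar> \<le> \<bar>P b - P a\<bar>"
  using assms[of a b] assms[of b a] by (cases "a \<le> b") (auto simp: abs_if algebra_simps)

lemma slope_window_spread:
  fixes P :: "int \<Rightarrow> int" and s n w :: int
  assumes slope_ge: "\<And>a b. a \<le> b \<Longrightarrow> s * (b - a) \<le> P b - P a"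
    and "0 \<le> s" "0 \<le> n" "finite J" "card J = Suc r"
    and hits: "\<And>j. j \<in> J \<Longrightarrow> \<exists>i t. 0 \<le> i \<and> i < s \<and> P j = w + i + t * n"
  obtains j1 j2 where "j1 \<in> J" "j2 \<in> J" "int r * n - s + 1 \<le> P j1 - P j2"
proof -
  obtain I T where IT: "\<And>j. j \<in> J \<Longrightarrow> 0 \<le> I j \<and> I j < s \<and> P j = w + I j + T j * n"
    using hits by metis
  have "inj_on T J"
  proof (rule inj_onI)
    fix j1 j2 assume j: "j1 \<in> J" "j2 \<in> J" "T j1 = T j2"
    then have "\<bar>P j2 - P j1\<bar> < s" using IT[OF j(1)] IT[OF j(2)] by auto
    then have close: "s * \<bar>j2 - j1\<bar> < s" using slope_abs_ge[OF slope_ge] by (meson le_less_trans)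
    show "j1 = j2"
    proof (rule ccontr)
      assume "j1 \<noteq> j2"
      then have "s * 1 \<le> s * \<bar>j2 - j1\<bar>" using \<open>0 \<le> s\<close> by (intro mult_left_mono) auto
      then show False using close by simp
    qed
  qed
  then have "card (T ` J) = Suc r" using \<open>card J = Suc r\<close> by (simp add: card_image)
  moreover have "J \<noteq> {}" using \<open>card J = Suc r\<close> by auto
  then have "int (card (T ` J)) \<le> Max (T ` J) - Min (T ` J) + 1"
    using \<open>finite J\<close> by (intro card_le_Max_minus_Min) auto
  ultimately have "int r \<le> Max (T ` J) - Min (T ` J)" by simp
  moreover have "Max (T ` J) \<in> T ` J" "Min (T ` J) \<in> T ` J"
    using \<open>finite J\<close> \<open>J \<noteq> {}\<close> by simp_all
  then obtain j1 j2 where j: "j1 \<in> J" "j2 \<in> J" "T j1 = Max (T ` J)" "T j2 = Min (T ` J)"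
    by (metis imageE)
  ultimately have "int r * n \<le> (T j1 - T j2) * n"
    using \<open>0 \<le> n\<close> by (intro mult_right_mono) simp_all
  moreover have "P j1 - P j2 = I j1 - I j2 + (T j1 - T j2) * n"
    using IT[OF j(1)] IT[OF j(2)] by (simp add: algebra_simps)
  ultimately have "int r * n - s + 1 \<le> P j1 - P j2"
    using IT[OF j(1)] IT[OF j(2)] by linarith
  with j(1,2) show thesis by (rule that)
qed

lemma slope_window_bound:
  fixes P :: "int \<Rightarrow> int" and s k n d y w :: int
  assumes slope_ge: "\<And>a b. a \<le> b \<Longrightarrow> s * (b - a) \<le> P b - P a"
    and slope_le: "\<And>a b. a \<le> b \<Longrightarrow> b - a < n \<Longrightarrow> P b - P a \<le> (s + 1) * (b - a) + d - 1"
    and "0 \<le> s" "k \<le> n" "J \<subseteq> {y..<y + k}" "card J = Suc r"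
    and hits: "\<And>j. j \<in> J \<Longrightarrow> \<exists>i t. 0 \<le> i \<and> i < s \<and> P j = w + i + t * n"
  shows "int r * n \<le> k * (s + 1) + d - 3"
proof -
  have "finite J" "J \<noteq> {}" using \<open>card J = Suc r\<close> card_eq_0_iff by fastforce+
  then have "1 \<le> k" using \<open>J \<subseteq> {y..<y + k}\<close> by fastforce
  have "1 \<le> d" using slope_le[of y y] \<open>1 \<le> k\<close> \<open>k \<le> n\<close> by simp
  have "0 \<le> n" using \<open>1 \<le> k\<close> \<open>k \<le> n\<close> by simp
  obtain j1 j2 where j: "j1 \<in> J" "j2 \<in> J" and lower: "int r * n - s + 1 \<le> P j1 - P j2"
    using slope_window_spread[OF slope_ge \<open>0 \<le> s\<close> \<open>0 \<le> n\<close> \<open>finite J\<close> \<open>card J = Suc r\<close> hits] .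
  show ?thesis
  proof (cases "j2 < j1")
    case True
    have "j1 - j2 < k"
      using j \<open>J \<subseteq> {y..<y + k}\<close> atLeastLessThan_iff subsetD
      by (metis add.commute diff_less_eq less_le_trans not_less)
    then have "(s + 1) * (j1 - j2) \<le> (s + 1) * (k - 1)"
      using \<open>0 \<le> s\<close> by (intro mult_left_mono) simp_all
    moreover have "P j1 - P j2 \<le> (s + 1) * (j1 - j2) + d - 1"
      using slope_le[of j2 j1] True \<open>j1 - j2 < k\<close> \<open>k \<le> n\<close> by simp
    ultimately show ?thesis using lower by (simp add: algebra_simps)
  next
    case False
    then have "0 \<le> s * (j2 - j1)" using \<open>0 \<le> s\<close> by simp
    then have "P j1 - P j2 \<le> 0" using slope_ge[of j1 j2] False by simp
    moreover have "s + 1 \<le> k * (s + 1)"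
      using \<open>1 \<le> k\<close> \<open>0 \<le> s\<close> by simp
    ultimately show ?thesis using lower \<open>1 \<le> d\<close> by linarith
  qed
qed

lemma cyc_norm_less_imp_window:
  assumes "X \<subseteq> {0..<n}" "0 < n" "cyc_norm n X < t"
  obtains x where "\<forall>z\<in>X. \<exists>i<t. z = (x + i) mod n"
proof -
  have "X \<subseteq> cyc_interval n 0 (n - 1)"
  proof
    fix z assume "z \<in> X"
    then have "z \<le> n - 1 \<and> z = (0 + z) mod n" using assms(1) by auto
    then show "z \<in> cyc_interval n 0 (n - 1)" unfolding cyc_interval_def by blast
  qed
  then have "\<exists>t. \<exists>x<n. X \<subseteq> cyc_interval n x t" using assms(2) by blast
  then have "\<exists>x<n. X \<subseteq> cyc_interval n x (cyc_norm n X)"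
    unfolding cyc_norm_def by (rule LeastI_ex)
  then obtain x where "X \<subseteq> cyc_interval n x (cyc_norm n X)" by blast
  then have "\<forall>z\<in>X. \<exists>i\<le>cyc_norm n X. z = (x + i) mod n"
    unfolding cyc_interval_def by blast
  then have "\<forall>z\<in>X. \<exists>i<t. z = (x + i) mod n"
    using assms(3) by (metis le_less_trans)
  then show thesis by (rule that)
qed

lemma clash_free_inv_into:
  assumes "bij_betw \<sigma> {0..<n} {0..<n}" "clash_free n \<sigma> k s r"
  shows "clash_free n (inv_into {0..<n} \<sigma>) s k r"
  unfolding clash_free_def
proof
  assume "\<exists>X. is_clash n (inv_into {0..<n} \<sigma>) s k r X"
  then obtain X where X: "X \<subseteq> {0..<n}" "card X = r + 1" "cyc_norm n X < s"
      "cyc_norm n (inv_into {0..<n} \<sigma> ` X) < k"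
    unfolding is_clash_def by blast
  define Y where "Y = inv_into {0..<n} \<sigma> ` X"
  have "bij_betw (inv_into {0..<n} \<sigma>) {0..<n} {0..<n}"
    using assms(1) by (rule bij_betw_inv_into)
  then have "Y \<subseteq> {0..<n}" "card Y = card X"
    unfolding Y_def using X(1) by (auto simp: bij_betw_def card_image inj_on_subset)
  moreover have "\<sigma> ` Y = X"
    unfolding Y_def using X(1) assms(1) by (simp add: bij_betw_def image_inv_into_cancel)
  ultimately have "is_clash n \<sigma> k s r Y"
    using X unfolding is_clash_def Y_def[symmetric] by simp
  then show False using assms(2) unfolding clash_free_def by blast
qed

definition skew_lift :: "nat \<Rightarrow> nat \<Rightarrow> nat \<Rightarrow> int \<Rightarrow> int" where
  "skew_lift c d m y = int c * y - y div int m + int d * (y div int (d * m))"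

definition skew_perm :: "nat \<Rightarrow> nat \<Rightarrow> nat \<Rightarrow> nat \<Rightarrow> nat" where
  "skew_perm c d m y = nat (skew_lift c d m (int y) mod int (d * m))"

lemma int_skew_perm:
  assumes "0 < d" "0 < m"
  shows "int (skew_perm c d m y) = skew_lift c d m (int y) mod int (d * m)"
  unfolding skew_perm_def using assms by simp

lemma skew_lift_add_period:
  assumes "0 < d" "0 < m"
  shows "skew_lift c d m (y + t * int (d * m)) = skew_lift c d m y + int c * int (d * m) * t"
proof -
  have "(y + (t * int d) * int m) div int m = t * int d + y div int m"
    using assms(2) by simp
  moreover have "(y + t * int (d * m)) div int (d * m) = t + y div int (d * m)"
    using assms by (intro div_mult_self1) simp
  ultimately show ?thesis unfolding skew_lift_def by (simp add: algebra_simps)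
qed

lemma skew_lift_mod:
  assumes "0 < d" "0 < m"
  shows "skew_lift c d m (y mod int (d * m)) mod int (d * m) = skew_lift c d m y mod int (d * m)"
proof -
  define n where "n = int (d * m)"
  have "skew_lift c d m y = skew_lift c d m (y mod n + (y div n) * n)"
    by (simp only: mod_div_mult_eq)
  also have "\<dots> = skew_lift c d m (y mod n) + (int c * (y div n)) * n"
    unfolding n_def skew_lift_add_period[OF assms] by (simp only: mult_ac)
  finally show ?thesis unfolding n_def[symmetric] by (simp only: mod_mult_self1)
qed

lemma skew_lift_diff:
  "skew_lift c d m b - skew_lift c d m a
    = int c * (b - a) - (b div int m - a div int m) + int d * (b div int (d * m) - a div int (d * m))"
  unfolding skew_lift_def by (simp only: algebra_simps)

lemma skew_lift_diff_ge:
  assumes "0 < d" "0 < m" "a \<le> b"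
  shows "(int c - 1) * (b - a) \<le> skew_lift c d m b - skew_lift c d m a"
proof -
  have "b div int m - a div int m \<le> b - a" using assms by (simp add: zdiv_diff_le)
  moreover have "0 \<le> int d * (b div int (d * m) - a div int (d * m))"
    using assms by (simp add: zdiv_mono1)
  ultimately show ?thesis unfolding skew_lift_diff by (simp add: algebra_simps)
qed

lemma skew_lift_diff_le:
  assumes "0 < d" "0 < m" "a \<le> b" "b - a < int (d * m)"
  shows "skew_lift c d m b - skew_lift c d m a \<le> int c * (b - a) + int d - 1"
proof -
  let ?n = "int (d * m)"
  have block_le: "a div int m \<le> b div int m" using assms by (simp add: zdiv_mono1)
  have period_le: "a div ?n \<le> b div ?n" using assms by (simp add: zdiv_mono1)
  have "b div ?n \<le> (a + ?n) div ?n" using assms by (simp add: zdiv_mono1)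
  also have "\<dots> = a div ?n + 1" by (rule div_add_self2) (use assms in simp)
  finally have period_step: "b div ?n \<le> a div ?n + 1" .
  have period_block: "b div ?n = (b div int m) div int d" "a div ?n = (a div int m) div int d"
    unfolding of_nat_mult mult.commute[of "int d"] by (simp_all add: zdiv_zmult2_eq)
  show ?thesis
  proof (cases "a div ?n = b div ?n")
    case True
    then show ?thesis unfolding skew_lift_diff using block_le assms(1) by simp
  next
    case False
    then have "b div ?n - a div ?n = 1" using period_le period_step by simp
    moreover have "a div int m < b div int m"
      using False period_block block_le by (metis order_less_le)
    ultimately show ?thesis unfolding skew_lift_diff by simp
  qed
qed

lemma skew_lift_mod_inj:
  assumes "0 < d" "0 < m" "c = d * a" "coprime a m" "y1 < d * m" "y2 < d * m"
    and "skew_lift c d m (int y1) mod int (d * m) = skew_lift c d m (int y2) mod int (d * m)"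
  shows "y1 = y2"
proof -
  have small_multiple: "x = 0" if "e dvd x" "\<bar>x\<bar> < e" for e x :: int
  proof (rule ccontr)
    assume "x \<noteq> 0"
    then have "\<bar>e\<bar> \<le> \<bar>x\<bar>" using that(1) by (rule dvd_imp_le_int)
    then show False using that(2) by linarith
  qed
  have lift: "skew_lift c d m (int y) = int c * int y - int (y div m)" if "y < d * m" for y
    unfolding skew_lift_def using that by (simp add: zdiv_int[symmetric] del: of_nat_mult)
  have blocks: "y1 div m < d" "y2 div m < d"
    using assms(2,5,6) by (simp_all add: div_less_iff_less_mult)
  have "int (d * m) dvd skew_lift c d m (int y1) - skew_lift c d m (int y2)"
    using assms(7) by (simp add: mod_eq_dvd_iff)
  also have "skew_lift c d m (int y1) - skew_lift c d m (int y2)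
      = int d * (int a * (int y1 - int y2)) - (int (y1 div m) - int (y2 div m))"
    unfolding lift[OF assms(5)] lift[OF assms(6)] by (simp add: assms(3) algebra_simps)
  finally have n_dvd: "int d * int m dvd \<dots>" by simp
  then have "int d dvd int (y1 div m) - int (y2 div m)"
    by (metis dvd_diff_right_iff dvd_mult_left dvd_triv_left)
  then have same_block: "y1 div m = y2 div m"
    using small_multiple[of "int d"] blocks by fastforce
  then have "int m dvd int a * (int y1 - int y2)"
    using n_dvd assms(1) by simp
  then have "int m dvd int y1 - int y2"
    using assms(4) by (simp add: coprime_dvd_mult_right_iff coprime_commute)
  moreover have "int y = int (y div m * m) + int (y mod m)" for y
    by (simp only: of_nat_add[symmetric] div_mult_mod_eq)
  ultimately have "int m dvd int (y1 mod m) - int (y2 mod m)"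
    using same_block by (metis add_diff_cancel_left)
  moreover have "\<bar>int (y1 mod m) - int (y2 mod m)\<bar> < int m"
    using mod_less_divisor[OF assms(2), of y1] mod_less_divisor[OF assms(2), of y2] by linarith
  ultimately have "y1 mod m = y2 mod m"
    using small_multiple by fastforce
  then show ?thesis using same_block by (metis div_mult_mod_eq)
qed

lemma bij_betw_skew_perm:
  assumes "0 < d" "0 < m" "c = d * a" "coprime a m"
  shows "bij_betw (skew_perm c d m) {0..<d * m} {0..<d * m}"
proof -
  have "inj_on (skew_perm c d m) {0..<d * m}"
  proof (rule inj_onI)
    fix y1 y2 assume "y1 \<in> {0..<d * m}" "y2 \<in> {0..<d * m}"
      and "skew_perm c d m y1 = skew_perm c d m y2"
    then show "y1 = y2"
      using skew_lift_mod_inj[OF assms] int_skew_perm[OF assms(1,2)]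
      by (metis atLeastLessThan_iff)
  qed
  moreover have "skew_perm c d m y < d * m" for y
  proof -
    have "int (skew_perm c d m y) < int (d * m)"
      unfolding int_skew_perm[OF assms(1,2)] by (rule pos_mod_bound) (use assms(1,2) in simp)
    then show ?thesis by (simp only: of_nat_less_iff)
  qed
  then have "skew_perm c d m ` {0..<d * m} \<subseteq> {0..<d * m}" by auto
  ultimately show ?thesis
    unfolding bij_betw_def by (simp add: endo_inj_surj)
qed

lemma skew_perm_in_window:
  assumes "0 < d" "0 < m" "skew_perm c d m ((y + j) mod (d * m)) = (w + i) mod (d * m)"
  shows "\<exists>t. skew_lift c d m (int y + int j) = int w + int i + t * int (d * m)"
proof -
  have "int ((y + j) mod (d * m)) = (int y + int j) mod int (d * m)"
    by (simp only: of_nat_mod of_nat_add)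
  then have "skew_lift c d m (int y + int j) mod int (d * m)
      = int (skew_perm c d m ((y + j) mod (d * m)))"
    using int_skew_perm[OF assms(1,2)] skew_lift_mod[OF assms(1,2)] by simp
  also have "\<dots> = (int w + int i) mod int (d * m)"
    using assms(3) by (simp add: of_nat_mod)
  finally have "int (d * m) dvd skew_lift c d m (int y + int j) - (int w + int i)"
    by (simp add: mod_eq_dvd_iff)
  then obtain t where "skew_lift c d m (int y + int j) - (int w + int i) = int (d * m) * t"
    by (elim dvdE)
  then show ?thesis by (intro exI[of _ t]) (simp add: algebra_simps)
qed

lemma skew_perm_clash_free:
  assumes "0 < d" "0 < m" "s + 1 = d * a" "coprime a m" "k \<le> d * m"
    and "int k * (int s + 1) + int d - 3 < int r * int (d * m)"
  shows "clash_free (d * m) (skew_perm (s + 1) d m) k s r"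
  unfolding clash_free_def
proof
  let ?n = "d * m" and ?\<sigma> = "skew_perm (s + 1) d m" and ?P = "skew_lift (s + 1) d m"
  assume "\<exists>Y. is_clash ?n ?\<sigma> k s r Y"
  then obtain Y where Y: "Y \<subseteq> {0..<?n}" "card Y = Suc r" "cyc_norm ?n Y < k"
      "cyc_norm ?n (?\<sigma> ` Y) < s"
    unfolding is_clash_def by auto
  have "0 < ?n" using assms(1,2) by simp
  have "?\<sigma> ` Y \<subseteq> {0..<?n}"
    using Y(1) bij_betw_skew_perm[OF assms(1-4)] by (auto dest: bij_betw_imp_surj_on)
  obtain w where w: "\<forall>x\<in>?\<sigma> ` Y. \<exists>i<s. x = (w + i) mod ?n"
    using cyc_norm_less_imp_window[OF \<open>?\<sigma> ` Y \<subseteq> _\<close> \<open>0 < ?n\<close> Y(4)] .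
  obtain y where "\<forall>z\<in>Y. \<exists>j<k. z = (y + j) mod ?n"
    using cyc_norm_less_imp_window[OF Y(1) \<open>0 < ?n\<close> Y(3)] .
  then obtain J where J: "\<And>z. z \<in> Y \<Longrightarrow> J z < k \<and> z = (y + J z) mod ?n" by metis
  define L where "L = (\<lambda>z. int y + int (J z)) ` Y"
  have "inj_on (\<lambda>z. int y + int (J z)) Y"
    by (rule inj_onI) (metis J of_nat_eq_iff add_left_cancel)
  then have card_L: "card L = Suc r" unfolding L_def using Y(2) by (simp add: card_image)
  have L_sub: "L \<subseteq> {int y..<int y + int k}" unfolding L_def using J by force
  have hits: "\<exists>i t. 0 \<le> i \<and> i < int s \<and> ?P l = int w + i + t * int ?n" if "l \<in> L" for l
  proof -
    obtain z where z: "z \<in> Y" "l = int y + int (J z)" using \<open>l \<in> L\<close> unfolding L_def by blast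
    obtain i where i: "i < s" "?\<sigma> z = (w + i) mod ?n" using w z(1) by blast
    then have "?\<sigma> ((y + J z) mod ?n) = (w + i) mod ?n" using J[OF z(1)] by simp
    then obtain t where "?P l = int w + int i + t * int ?n"
      using skew_perm_in_window[OF assms(1,2)] z(2) by blast
    then show ?thesis using i(1) by (intro exI[of _ "int i"] exI[of _ t]) simp
  qed
  have slope_ge: "int s * (l' - l) \<le> ?P l' - ?P l" if "l \<le> l'" for l l'
    using skew_lift_diff_ge[OF assms(1,2) that, of "s + 1"] by simp
  have slope_le: "?P l' - ?P l \<le> (int s + 1) * (l' - l) + int d - 1"
    if "l \<le> l'" "l' - l < int ?n" for l l'
    using skew_lift_diff_le[OF assms(1,2) that, of "s + 1"] by (simp add: add.commute)
  have "int k \<le> int ?n" using assms(5) by (simp only: of_nat_le_iff)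
  with slope_ge slope_le L_sub card_L hits
  have "int r * int ?n \<le> int k * (int s + 1) + int d - 3"
    by (intro slope_window_bound[of "int s" ?P]) auto
  then show False using assms(6) by simp
qed

theorem theorem4:
  fixes r s k n :: nat
  assumes "0 < r" "0 < s" "0 < k" "0 < n"
    and "r < k" "k < n" "s + 1 < n"
    and "int k * (int s + 1) + int (gcd (s + 1) n) - 3 \<le> int r * int n - 1"
  shows "\<exists>\<pi>. bij_betw \<pi> {0..<n} {0..<n} \<and> clash_free n \<pi> s k r"
proof -
  define d where "d = gcd (s + 1) n"
  define m where "m = n div d"
  define a where "a = (s + 1) div d"
  have "n = d * m" "s + 1 = d * a" "coprime a m"
    unfolding d_def m_def a_def by (auto intro: div_gcd_coprime)
  moreover from this have "0 < d" "0 < m" using assms(4) by auto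
  moreover have "int k * (int s + 1) + int d - 3 < int r * int n"
    using assms(8) unfolding d_def by simp
  ultimately have "bij_betw (skew_perm (s + 1) d m) {0..<n} {0..<n}"
    and "clash_free n (skew_perm (s + 1) d m) k s r"
    using bij_betw_skew_perm[of d m "s + 1" a] skew_perm_clash_free[of d m s a k r] assms(6)
    by simp_all
  then show ?thesis
    by (intro exI[of _ "inv_into {0..<n} (skew_perm (s + 1) d m)"])
      (simp add: bij_betw_inv_into clash_free_inv_into)
qed

end
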